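(* Let $(G,\Sigma)$ be an $n$-vertex signed graph and let $v,w$ be non-adjacent vertices of $G$ with degrees $d_1,d_2$, such that $N^-(v)=\emptyset$ and $N^-(w)\subseteq N(v)\cap N(w)$. Set $V_1=N^+(v)\setminus N(w)$, $V_2=N^+(w)\setminus N(v)$, $V_3=N^+(v)\cap N^+(w)$, $V_4=N^+(v)\cap N^-(w)$, $V_5=V(G)\setminus(N(v)\cup N(w)\cup\{v,w\})$, and order the vertices as $v,w,V_1,V_2,V_3,V_4,V_5$. Suppose spectral integral variation of type 2 occurs under the addition of an even edge $vw$, increasing the eigenvalues $\lambda_1,\lambda_2$ of $L(G,\Sigma)$ by $1$, and that there is an orthogonal basis $v_1,\dots,v_n$ of eigenvectors of $L(G,\Sigma)$ such that: (1) for $i\in\{1,2\}$, $v_i$ is a $\lambda_i$-eigenvector with first two entries $a_i,b_i$ satisfying $(a_i-b_i)^2/\|v_i\|^2=1+1/(\lambda_{3-i}-\lambda_i)$; (2) for $j\in\{3,\dots,n\}$ the first two entries of $v_j$ are equal; and (3) for $i\in\{1,2\}$, the vector obtained from $v_i$ by deleting its first two entries equals $x_2-x_1$, where $x_1,x_2$ are the first and second columns of $L(G,\Sigma)$ with their first two entries deleted (i.e. it equals $\mathbf{1}$ on $V_1$, $-\mathbf{1}$ on $V_2$, $\mathbf{0}$ on $V_3$, $2\cdot\mathbf{1}$ on $V_4$, $\mathbf{0}$ on $V_5$). Then for each $i\in\{1,2\}$, $a_i=-\lambda_i+d_2+1$ and $b_i=\lambda_i-d_1-1$.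
   Context: All graphs are finite and simple. A signed graph is a pair $(G,\Sigma)$ with $\Sigma\subseteq E(G)$; edges in $\Sigma$ are odd, the others even. $N^-(u)$ (resp. $N^+(u)$) is the set of neighbors joined to $u$ by an odd (resp. even) edge, and $N(u)=N^-(u)\cup N^+(u)$. The signed Laplacian is $L(G,\Sigma)=D(G)-A(G,\Sigma)$, $D(G)$ the diagonal degree matrix, $A(G,\Sigma)$ having $(i,j)$-entry $1$ for an even edge, $-1$ for an odd edge, $0$ otherwise. Adding an even edge $vw$ means passing from $L(G,\Sigma)$ to $L(G+vw,\Sigma)$. Spectral integral variation of type 2 means the multiset of eigenvalues of $L(G+vw,\Sigma)$ is obtained from that of $L(G,\Sigma)$ by increasing two eigenvalues (counted with multiplicity) by $1$ each. *)

theory Defs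
  imports "Jordan_Normal_Form.Char_Poly" "HOL-Computational_Algebra.Polynomial"
begin

text \<open>Signed graphs on the vertex set {0..<n}. Edges are 2-element sets {x,y};
  the odd edges form a subset Sg of the edge set.\<close>

definition signed_graph :: "nat \<Rightarrow> nat set set \<Rightarrow> nat set set \<Rightarrow> bool" where
  "signed_graph n E Sg \<longleftrightarrow>
     (\<forall>e\<in>E. \<exists>x y. e = {x, y} \<and> x \<noteq> y \<and> x < n \<and> y < n) \<and> Sg \<subseteq> E"

definition nbr :: "nat \<Rightarrow> nat set set \<Rightarrow> nat \<Rightarrow> nat set" where
  "nbr n E u = {x. x < n \<and> {u, x} \<in> E}"

definition nbr_minus :: "nat \<Rightarrow> nat set set \<Rightarrow> nat set set \<Rightarrow> nat \<Rightarrow> nat set" where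
  "nbr_minus n E Sg u = {x. x < n \<and> {u, x} \<in> E \<and> {u, x} \<in> Sg}"

definition nbr_plus :: "nat \<Rightarrow> nat set set \<Rightarrow> nat set set \<Rightarrow> nat \<Rightarrow> nat set" where
  "nbr_plus n E Sg u = {x. x < n \<and> {u, x} \<in> E \<and> {u, x} \<notin> Sg}"

definition vdegree :: "nat \<Rightarrow> nat set set \<Rightarrow> nat \<Rightarrow> nat" where
  "vdegree n E u = card (nbr n E u)"

text \<open>Signed Laplacian L = D - A, with A(i,j) = 1 for an even edge, -1 for an odd edge.\<close>
definition signed_laplacian :: "nat \<Rightarrow> nat set set \<Rightarrow> nat set set \<Rightarrow> real mat" where
  "signed_laplacian n E Sg = mat n n (\<lambda>(i, j).
     if i = j then real (vdegree n E i)
     else if {i, j} \<in> E then (if {i, j} \<in> Sg then 1 else -1)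
     else 0)"

definition eigenvalues_mset :: "real mat \<Rightarrow> real multiset" where
  "eigenvalues_mset A = proots (char_poly A)"

definition siv_type2 :: "nat \<Rightarrow> nat set set \<Rightarrow> nat set set \<Rightarrow> nat \<Rightarrow> nat \<Rightarrow> real \<Rightarrow> real \<Rightarrow> bool" where
  "siv_type2 n E Sg v w l1 l2 \<longleftrightarrow>
     {#l1, l2#} \<subseteq># eigenvalues_mset (signed_laplacian n E Sg) \<and>
     eigenvalues_mset (signed_laplacian n (insert {v, w} E) Sg)
       = eigenvalues_mset (signed_laplacian n E Sg) - {#l1, l2#} + {#l1 + 1, l2 + 1#}"

end

theory Submission
  imports Defs
begin

text \<open>Let \<open>y = e\<^sub>v - e\<^sub>w\<close>. By condition (2), \<open>y\<close> is orthogonal to \<open>v\<^sub>3, \<dots>, v\<^sub>n\<close>, so it lies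
  in the span of \<open>v\<^sub>1, v\<^sub>2\<close>. If the common tail \<open>t\<close> of \<open>v\<^sub>1, v\<^sub>2\<close> (condition (3)) is nonzero at
  some vertex \<open>u\<close>, then comparing the \<open>u\<close>-entries of \<open>y\<close> and \<open>L y\<close> (where \<open>(L y)\<^sub>u = -t\<^sub>u\<close>) gives
  \<open>v\<^sub>1 - v\<^sub>2 = (\<lambda>\<^sub>2 - \<lambda>\<^sub>1) y\<close>, hence \<open>v\<^sub>1 = \<lambda>\<^sub>2 y - L y\<close> and \<open>v\<^sub>2 = \<lambda>\<^sub>1 y - L y\<close>. Reading off the
  entries at \<open>v\<close> and \<open>w\<close> gives \<open>a\<^sub>i, b\<^sub>i\<close> in terms of the other eigenvalue, and condition (1)
  for \<open>v\<^sub>1\<close> becomes \<open>\<lambda>\<^sub>1 + \<lambda>\<^sub>2 = d\<^sub>1 + d\<^sub>2 + 1\<close>. If the tail vanishes, \<open>v\<close> and \<open>w\<close> have the same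
  neighbours and both eigenvectors are supported on \<open>{v, w}\<close>, forcing \<open>\<lambda>\<^sub>1 = \<lambda>\<^sub>2 = d\<^sub>1\<close>.
  Of condition (1) only the case \<open>i = 1\<close> is used.\<close>

lemma scalar_prod_self_pos:
  fixes x :: "real vec"
  assumes "x \<in> carrier_vec n" "x \<noteq> 0\<^sub>v n"
  shows "x \<bullet> x > 0"
  using conjugate_square_greater_0_vec[OF assms(1)] assms(2) by simp

lemma scalar_prod_unit_vec_diff:
  fixes x :: "'a :: comm_ring_1 vec"
  assumes "x \<in> carrier_vec n" "v < n" "w < n"
  shows "x \<bullet> (unit_vec n v - unit_vec n w) = x $ v - x $ w"
  using assms by (simp add: scalar_prod_minus_distrib[of x n "unit_vec n v" "unit_vec n w"])

lemma orthogonal_family_complete: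
  fixes vs :: "nat \<Rightarrow> real vec"
  assumes carrier: "\<forall>j\<in>{1..n}. vs j \<in> carrier_vec n"
    and nonzero: "\<forall>j\<in>{1..n}. vs j \<noteq> 0\<^sub>v n"
    and orth: "\<forall>j\<in>{1..n}. \<forall>k\<in>{1..n}. j \<noteq> k \<longrightarrow> vs j \<bullet> vs k = 0"
    and z: "z \<in> carrier_vec n"
    and z_orth: "\<forall>j\<in>{1..n}. vs j \<bullet> z = 0"
  shows "z = 0\<^sub>v n"
proof -
  define M where "M = mat n n (\<lambda>(j, k). vs (Suc j) $ k)"
  have M: "M \<in> carrier_mat n n" unfolding M_def by simp
  have row_M: "row M j = vs (Suc j)" if "j < n" for j
  proof -
    have "vs (Suc j) \<in> carrier_vec n" using carrier that by auto
    then show ?thesis using that unfolding M_def by (intro eq_vecI) auto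
  qed
  define G where "G = M * transpose_mat M"
  have G: "G \<in> carrier_mat n n" unfolding G_def using M by simp
  have G_entry: "G $$ (i, j) = vs (Suc i) \<bullet> vs (Suc j)" if "i < n" "j < n" for i j
    using that M row_M unfolding G_def by (simp add: row_transpose)
  have "upper_triangular G"
    unfolding upper_triangular_def using G G_entry orth by auto
  then have "det G = (\<Prod>i = 0..<n. G $$ (i, i))"
    using det_upper_triangular[OF _ G] prod_list_diag_prod[of G] G by simp
  also have "\<dots> > 0"
  proof (intro prod_pos)
    fix i assume "i \<in> {0..<n}"
    then have "Suc i \<in> {1..n}" by auto
    then show "G $$ (i, i) > 0"
      using G_entry carrier nonzero scalar_prod_self_pos[of "vs (Suc i)" n] by auto
  qed
  finally have "det M \<noteq> 0"
    unfolding G_def using det_mult[OF M] det_transpose[OF M] M by auto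
  moreover have "M *\<^sub>v z = 0\<^sub>v n"
    using z_orth row_M z M by (intro eq_vecI) auto
  ultimately show ?thesis
    using det_0_iff_vec_prod_zero[OF M] z by blast
qed

lemma orthogonal_expansion_two:
  fixes vs :: "nat \<Rightarrow> real vec"
  assumes carrier: "\<forall>j\<in>{1..n}. vs j \<in> carrier_vec n"
    and nonzero: "\<forall>j\<in>{1..n}. vs j \<noteq> 0\<^sub>v n"
    and orth: "\<forall>j\<in>{1..n}. \<forall>k\<in>{1..n}. j \<noteq> k \<longrightarrow> vs j \<bullet> vs k = 0"
    and n: "2 \<le> n"
    and z: "z \<in> carrier_vec n"
    and z_orth: "\<forall>j\<in>{3..n}. vs j \<bullet> z = 0"
  shows "z = (vs 1 \<bullet> z / (vs 1 \<bullet> vs 1)) \<cdot>\<^sub>v vs 1 + (vs 2 \<bullet> z / (vs 2 \<bullet> vs 2)) \<cdot>\<^sub>v vs 2"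
    (is "z = ?c1 \<cdot>\<^sub>v vs 1 + ?c2 \<cdot>\<^sub>v vs 2")
proof -
  have one_two: "1 \<in> {1..n}" "2 \<in> {1..n}" using n by auto
  then have x1: "vs 1 \<in> carrier_vec n" and x2: "vs 2 \<in> carrier_vec n"
    using carrier by auto
  have N1: "vs 1 \<bullet> vs 1 > 0" and N2: "vs 2 \<bullet> vs 2 > 0"
    using scalar_prod_self_pos[of "vs 1" n] scalar_prod_self_pos[of "vs 2" n] x1 x2 nonzero one_two
    by auto
  define r where "r = z - (?c1 \<cdot>\<^sub>v vs 1 + ?c2 \<cdot>\<^sub>v vs 2)"
  have r: "r \<in> carrier_vec n" unfolding r_def using z x1 x2 by simp
  have "vs j \<bullet> r = 0" if j: "j \<in> {1..n}" for j
  proof -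
    have xj: "vs j \<in> carrier_vec n" using carrier j by auto
    have expand: "vs j \<bullet> r = vs j \<bullet> z - (?c1 * (vs j \<bullet> vs 1) + ?c2 * (vs j \<bullet> vs 2))"
      unfolding r_def using xj x1 x2 z
      by (simp add: scalar_prod_minus_distrib[of _ n] scalar_prod_add_distrib[of _ n])
    consider "j = 1" | "j = 2" | "j \<in> {3..n}" using j by fastforce
    then show ?thesis
    proof cases
      case 1
      then show ?thesis using expand N1 orth one_two by simp
    next
      case 2
      then show ?thesis using expand N2 orth one_two by simp
    next
      case 3
      then have "vs j \<bullet> vs 1 = 0" "vs j \<bullet> vs 2 = 0" using orth one_two by auto
      then show ?thesis using expand 3 z_orth by simp
    qed
  qed
  then have "r = 0\<^sub>v n"
    using orthogonal_family_complete[OF carrier nonzero orth r] by blast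
  then show ?thesis
  proof (intro eq_vecI)
    fix i assume "i < dim_vec (?c1 \<cdot>\<^sub>v vs 1 + ?c2 \<cdot>\<^sub>v vs 2)"
    then have "i < n" using x2 by simp
    moreover from \<open>r = 0\<^sub>v n\<close> have "r $ i = 0" using \<open>i < n\<close> by simp
    ultimately show "z $ i = (?c1 \<cdot>\<^sub>v vs 1 + ?c2 \<cdot>\<^sub>v vs 2) $ i"
      unfolding r_def using z x1 x2 by simp
  qed (use z x1 x2 in simp)
qed

lemma unit_vec_diff_in_span_two:
  fixes vs :: "nat \<Rightarrow> real vec"
  assumes carrier: "\<forall>j\<in>{1..n}. vs j \<in> carrier_vec n"
    and nonzero: "\<forall>j\<in>{1..n}. vs j \<noteq> 0\<^sub>v n"
    and orth: "\<forall>j\<in>{1..n}. \<forall>k\<in>{1..n}. j \<noteq> k \<longrightarrow> vs j \<bullet> vs k = 0"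
    and vw: "v < n" "w < n" "v \<noteq> w"
    and equal_rest: "\<forall>j\<in>{3..n}. vs j $ v = vs j $ w"
  shows "\<exists>c1 c2. unit_vec n v - unit_vec n w = c1 \<cdot>\<^sub>v vs 1 + c2 \<cdot>\<^sub>v vs 2"
proof -
  have orth_rest: "\<forall>j\<in>{3..n}. vs j \<bullet> (unit_vec n v - unit_vec n w) = 0"
  proof
    fix j assume j: "j \<in> {3..n}"
    then have "vs j \<in> carrier_vec n" using carrier by auto
    then show "vs j \<bullet> (unit_vec n v - unit_vec n w) = 0"
      using scalar_prod_unit_vec_diff[of "vs j" n v w] vw equal_rest j by simp
  qed
  have "2 \<le> n" using vw by linarith
  then show ?thesis
    using orthogonal_expansion_two[OF carrier nonzero orth _ _ orth_rest] by auto
qed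

lemma difference_of_eigenvectors:
  fixes A :: "'a :: field mat"
  assumes A: "A \<in> carrier_mat n n"
    and x1: "x1 \<in> carrier_vec n" and x2: "x2 \<in> carrier_vec n"
    and ev1: "A *\<^sub>v x1 = l1 \<cdot>\<^sub>v x1" and ev2: "A *\<^sub>v x2 = l2 \<cdot>\<^sub>v x2"
    and y: "y = c1 \<cdot>\<^sub>v x1 + c2 \<cdot>\<^sub>v x2"
    and u: "u < n" and same: "x1 $ u = x2 $ u" and nonzero: "x1 $ u \<noteq> 0"
    and y_u: "y $ u = 0" and Ay_u: "(A *\<^sub>v y) $ u = - x1 $ u"
  shows "x1 - x2 = (l2 - l1) \<cdot>\<^sub>v y"
proof -
  let ?t = "x1 $ u"
  have "(c1 + c2) * ?t = 0"
    using y_u u x1 x2 same unfolding y by (simp add: distrib_right)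
  then have c2: "c2 = - c1"
    using nonzero by (simp add: add_eq_0_iff)
  have "A *\<^sub>v y = c1 \<cdot>\<^sub>v (A *\<^sub>v x1) + c2 \<cdot>\<^sub>v (A *\<^sub>v x2)"
    unfolding y using A x1 x2 by (simp add: mult_add_distrib_mat_vec[OF A] mult_mat_vec[OF A])
  then have "c1 * (l1 - l2) * ?t = - ?t"
    using Ay_u u x1 x2 same ev1 ev2 c2 by (simp add: algebra_simps)
  then have "(c1 * (l2 - l1) - 1) * ?t = 0"
    by (simp add: algebra_simps)
  then have c1: "c1 * (l2 - l1) = 1"
    using nonzero by simp
  show ?thesis
  proof (intro eq_vecI)
    fix i assume "i < dim_vec ((l2 - l1) \<cdot>\<^sub>v y)"
    then have "i < n" unfolding y using x2 by simp
    then have "((l2 - l1) \<cdot>\<^sub>v y) $ i = c1 * (l2 - l1) * (x1 $ i - x2 $ i)"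
      unfolding y using x1 x2 c2 by (simp add: algebra_simps)
    then show "(x1 - x2) $ i = ((l2 - l1) \<cdot>\<^sub>v y) $ i"
      using c1 \<open>i < n\<close> x2 by simp
  qed (use x1 x2 y in simp)
qed

lemma eigenvectors_from_difference:
  fixes A :: "'a :: field mat"
  assumes A: "A \<in> carrier_mat n n"
    and x1: "x1 \<in> carrier_vec n" and x2: "x2 \<in> carrier_vec n" and y: "y \<in> carrier_vec n"
    and ev1: "A *\<^sub>v x1 = l1 \<cdot>\<^sub>v x1" and ev2: "A *\<^sub>v x2 = l2 \<cdot>\<^sub>v x2"
    and distinct: "l1 \<noteq> l2"
    and diff: "x1 - x2 = (l2 - l1) \<cdot>\<^sub>v y"
  shows "x1 = l2 \<cdot>\<^sub>v y - A *\<^sub>v y" and "x2 = l1 \<cdot>\<^sub>v y - A *\<^sub>v y"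
proof -
  have "(l2 - l1) \<cdot>\<^sub>v (A *\<^sub>v y) = A *\<^sub>v (x1 - x2)"
    unfolding diff using A y by (simp add: mult_mat_vec)
  also have "\<dots> = l1 \<cdot>\<^sub>v x1 - l2 \<cdot>\<^sub>v x2"
    using A x1 x2 ev1 ev2 by (simp add: mult_minus_distrib_mat_vec)
  finally have Ay_vec: "(l2 - l1) \<cdot>\<^sub>v (A *\<^sub>v y) = l1 \<cdot>\<^sub>v x1 - l2 \<cdot>\<^sub>v x2" .
  have Ay: "(l2 - l1) * (A *\<^sub>v y) $ i = l1 * x1 $ i - l2 * x2 $ i" if "i < n" for i
    using arg_cong[OF Ay_vec, of "\<lambda>x. x $ i"] that A x1 x2 y by simp
  have x1_i: "x1 $ i = x2 $ i + (l2 - l1) * y $ i" if "i < n" for i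
    using arg_cong[OF diff, of "\<lambda>x. x $ i"] that x1 x2 y by (simp add: algebra_simps)
  have x2_i: "x2 $ i = l1 * y $ i - (A *\<^sub>v y) $ i" if "i < n" for i
  proof -
    have "(l2 - l1) * x2 $ i = (l2 - l1) * (l1 * y $ i - (A *\<^sub>v y) $ i)"
      using Ay[OF that] x1_i[OF that] by (simp add: algebra_simps)
    then show ?thesis using distinct by simp
  qed
  show "x2 = l1 \<cdot>\<^sub>v y - A *\<^sub>v y"
    using x2 y A x2_i by (intro eq_vecI) auto
  have "x1 $ i = l2 * y $ i - (A *\<^sub>v y) $ i" if "i < n" for i
    using x1_i[OF that] x2_i[OF that] by (simp add: algebra_simps)
  then show "x1 = l2 \<cdot>\<^sub>v y - A *\<^sub>v y"
    using x1 y A by (intro eq_vecI) auto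
qed

lemma entry_gap_from_normalisation:
  fixes x1 x2 :: "real vec"
  assumes x1: "x1 \<in> carrier_vec n" and x2: "x2 \<in> carrier_vec n" and nonzero: "x1 \<noteq> 0\<^sub>v n"
    and orth: "x1 \<bullet> x2 = 0" and vw: "v < n" "w < n"
    and diff: "x1 - x2 = \<delta> \<cdot>\<^sub>v (unit_vec n v - unit_vec n w)"
    and norm: "(x1 $ v - x1 $ w)\<^sup>2 / (x1 \<bullet> x1) = 1 + 1 / \<delta>"
  shows "x1 $ v - x1 $ w = \<delta> + 1"
proof -
  have "x1 \<bullet> x1 = x1 \<bullet> (x1 - x2)"
    using orth scalar_prod_minus_distrib[OF x1 x1 x2] by simp
  also have "\<dots> = \<delta> * (x1 $ v - x1 $ w)"
    unfolding diff using x1 scalar_prod_unit_vec_diff[OF x1 vw] by simp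
  finally have sq_norm: "x1 \<bullet> x1 = \<delta> * (x1 $ v - x1 $ w)" .
  moreover have "x1 \<bullet> x1 > 0"
    using scalar_prod_self_pos[OF x1 nonzero] .
  ultimately have "x1 $ v - x1 $ w \<noteq> 0" "\<delta> \<noteq> 0" by auto
  then have "(x1 $ v - x1 $ w) / \<delta> = 1 + 1 / \<delta>"
    using norm unfolding sq_norm by (simp add: power2_eq_square)
  then show ?thesis
    using \<open>\<delta> \<noteq> 0\<close> by (simp add: field_simps)
qed

lemma eigenvector_pair_entries:
  fixes A :: "real mat"
  assumes A: "A \<in> carrier_mat n n" and vw: "v < n" "w < n" "v \<noteq> w"
    and A_vw: "A $$ (v, w) = 0" "A $$ (w, v) = 0"
    and ev1: "eigenvector A x1 l1" and ev2: "eigenvector A x2 l2" and distinct: "l1 \<noteq> l2"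
    and orth: "x1 \<bullet> x2 = 0"
    and span: "unit_vec n v - unit_vec n w = c1 \<cdot>\<^sub>v x1 + c2 \<cdot>\<^sub>v x2"
    and u: "u < n" "u \<noteq> v" "u \<noteq> w"
    and tail: "x1 $ u = A $$ (u, w) - A $$ (u, v)" "x2 $ u = A $$ (u, w) - A $$ (u, v)"
    and tail_nonzero: "A $$ (u, w) - A $$ (u, v) \<noteq> 0"
    and norm: "(x1 $ v - x1 $ w)\<^sup>2 / (x1 \<bullet> x1) = 1 + 1 / (l2 - l1)"
  shows "x1 $ v = - l1 + A $$ (w, w) + 1 \<and> x1 $ w = l1 - A $$ (v, v) - 1 \<and>
         x2 $ v = - l2 + A $$ (w, w) + 1 \<and> x2 $ w = l2 - A $$ (v, v) - 1"
proof -
  define y :: "real vec" where "y = unit_vec n v - unit_vec n w"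
  have y: "y \<in> carrier_vec n" unfolding y_def by simp
  have y_entry: "y $ k = (if k = v then 1 else if k = w then -1 else 0)" if "k < n" for k
    using that vw unfolding y_def by auto
  have Ay: "(A *\<^sub>v y) $ k = A $$ (k, v) - A $$ (k, w)" if "k < n" for k
    using scalar_prod_unit_vec_diff[of "row A k" n v w] that vw A unfolding y_def by simp
  have x1: "x1 \<in> carrier_vec n" "x1 \<noteq> 0\<^sub>v n" "A *\<^sub>v x1 = l1 \<cdot>\<^sub>v x1"
    and x2: "x2 \<in> carrier_vec n" "A *\<^sub>v x2 = l2 \<cdot>\<^sub>v x2"
    using ev1 ev2 A unfolding eigenvector_def by auto
  have difference: "x1 - x2 = (l2 - l1) \<cdot>\<^sub>v y"
    using span tail tail_nonzero Ay[OF u(1)] y_entry[OF u(1)] u unfolding y_def[symmetric]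
    by (intro difference_of_eigenvectors[OF A x1(1) x2(1) x1(3) x2(2)]) auto
  then have "x1 = l2 \<cdot>\<^sub>v y - A *\<^sub>v y" and "x2 = l1 \<cdot>\<^sub>v y - A *\<^sub>v y"
    using eigenvectors_from_difference[OF A x1(1) x2(1) y x1(3) x2(2) distinct] by auto
  then have "x1 $ v = l2 - A $$ (v, v)" "x1 $ w = A $$ (w, w) - l2"
    and "x2 $ v = l1 - A $$ (v, v)" "x2 $ w = A $$ (w, w) - l1"
    using vw A y y_entry Ay A_vw by auto
  moreover have "x1 $ v - x1 $ w = l2 - l1 + 1"
    using entry_gap_from_normalisation[OF x1(1) x2(1) x1(2) orth vw(1,2)] difference norm
    unfolding y_def by blast
  ultimately show ?thesis by simp
qed

lemma eigenvalue_of_eigenvector_supported_on_pair: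
  fixes A :: "'a :: idom mat"
  assumes A: "A \<in> carrier_mat n n"
    and vw: "v < n" "w < n" "v \<noteq> w"
    and A_vw: "A $$ (v, w) = 0" and A_wv: "A $$ (w, v) = 0"
    and ev: "eigenvector A x l"
    and support: "\<forall>u<n. u \<noteq> v \<longrightarrow> u \<noteq> w \<longrightarrow> x $ u = 0"
  shows "l = A $$ (v, v) \<or> l = A $$ (w, w)"
proof -
  have x: "x \<in> carrier_vec n" "x \<noteq> 0\<^sub>v n" and Ax: "A *\<^sub>v x = l \<cdot>\<^sub>v x"
    using ev A unfolding eigenvector_def by auto
  have row: "l * x $ k = A $$ (k, v) * x $ v + A $$ (k, w) * x $ w" if "k < n" for k
  proof -
    have "l * x $ k = (\<Sum>j = 0..<n. A $$ (k, j) * x $ j)"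
      using arg_cong[OF Ax, of "\<lambda>y. y $ k"] that A x by (simp add: scalar_prod_def row_def)
    also have "\<dots> = (\<Sum>j\<in>{v, w}. A $$ (k, j) * x $ j)"
      using vw support by (intro sum.mono_neutral_right) auto
    finally show ?thesis using vw by simp
  qed
  have "x $ v \<noteq> 0 \<or> x $ w \<noteq> 0"
  proof (rule ccontr)
    assume "\<not> ?thesis"
    then have "x = 0\<^sub>v n" using support x by (intro eq_vecI) auto
    then show False using x by simp
  qed
  then show ?thesis
    using row[OF vw(1)] row[OF vw(2)] A_vw A_wv by auto
qed

lemma signed_graph_no_loop:
  assumes "signed_graph n E Sg"
  shows "{x} \<notin> E"
  using assms unfolding signed_graph_def by (metis doubleton_eq_iff insert_absorb2)

lemma signed_laplacian_carrier: "signed_laplacian n E Sg \<in> carrier_mat n n"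
  unfolding signed_laplacian_def by simp

lemma signed_laplacian_diag:
  "i < n \<Longrightarrow> signed_laplacian n E Sg $$ (i, i) = real (vdegree n E i)"
  unfolding signed_laplacian_def by simp

lemma signed_laplacian_nonzero_iff:
  "i < n \<Longrightarrow> j < n \<Longrightarrow> i \<noteq> j \<Longrightarrow> signed_laplacian n E Sg $$ (i, j) \<noteq> 0 \<longleftrightarrow> {i, j} \<in> E"
  unfolding signed_laplacian_def by simp

lemma signed_laplacian_nonedge:
  "i < n \<Longrightarrow> j < n \<Longrightarrow> i \<noteq> j \<Longrightarrow> {i, j} \<notin> E \<Longrightarrow> signed_laplacian n E Sg $$ (i, j) = 0"
  unfolding signed_laplacian_def by simp

lemma vdegree_eq_if_laplacian_columns_agree:
  assumes G: "signed_graph n E Sg"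
    and vw: "v < n" "w < n" "{v, w} \<notin> E"
    and columns: "\<forall>u<n. u \<noteq> v \<longrightarrow> u \<noteq> w \<longrightarrow>
                    signed_laplacian n E Sg $$ (u, v) = signed_laplacian n E Sg $$ (u, w)"
  shows "vdegree n E v = vdegree n E w"
proof -
  have "x \<in> nbr n E v \<longleftrightarrow> x \<in> nbr n E w" for x
  proof (cases "x \<in> {v, w} \<or> x \<ge> n")
    case True
    then show ?thesis
      using signed_graph_no_loop[OF G] vw unfolding nbr_def by (auto simp: insert_commute)
  next
    case False
    then show ?thesis
      using columns signed_laplacian_nonzero_iff[of x n v E Sg] signed_laplacian_nonzero_iff[of x n w E Sg] vw
      unfolding nbr_def by (auto simp: insert_commute)
  qed
  then have "nbr n E v = nbr n E w" by blast
  then show ?thesis unfolding vdegree_def by simp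
qed

lemma signed_laplacian_eigenvalue_if_supported_on_pair:
  assumes G: "signed_graph n E Sg"
    and vw: "v < n" "w < n" "v \<noteq> w" "{v, w} \<notin> E"
    and columns: "\<forall>u<n. u \<noteq> v \<longrightarrow> u \<noteq> w \<longrightarrow>
                    signed_laplacian n E Sg $$ (u, v) = signed_laplacian n E Sg $$ (u, w)"
    and ev: "eigenvector (signed_laplacian n E Sg) x l"
    and support: "\<forall>u<n. u \<noteq> v \<longrightarrow> u \<noteq> w \<longrightarrow> x $ u = 0"
  shows "l = real (vdegree n E v)"
proof -
  have "signed_laplacian n E Sg $$ (v, w) = 0" "signed_laplacian n E Sg $$ (w, v) = 0"
    using signed_laplacian_nonedge vw by (auto simp: insert_commute)
  then show ?thesis
    using eigenvalue_of_eigenvector_supported_on_pair[OF signed_laplacian_carrier vw(1-3) _ _ ev support]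
      vdegree_eq_if_laplacian_columns_agree[OF G vw(1,2,4) columns] signed_laplacian_diag vw
    by fastforce
qed

theorem lemma2p7:
  fixes n :: nat and E Sg :: "nat set set" and v w :: nat
    and l1 l2 :: real and vs :: "nat \<Rightarrow> real vec"
  defines "L \<equiv> signed_laplacian n E Sg"
  assumes G: "signed_graph n E Sg"
    and vw: "v < n" "w < n" "v \<noteq> w" "{v, w} \<notin> E"
    and Nv: "nbr_minus n E Sg v = {}"
    and Nw: "nbr_minus n E Sg w \<subseteq> nbr n E v \<inter> nbr n E w"
    and siv: "siv_type2 n E Sg v w l1 l2"
    and carrier: "\<forall>j\<in>{1..n}. vs j \<in> carrier_vec n"
    and nonzero: "\<forall>j\<in>{1..n}. vs j \<noteq> 0\<^sub>v n"
    and orth: "\<forall>j\<in>{1..n}. \<forall>k\<in>{1..n}. j \<noteq> k \<longrightarrow> vs j \<bullet> vs k = 0"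
    and eig: "\<forall>j\<in>{1..n}. \<exists>\<mu>. eigenvector L (vs j) \<mu>"
    and eig1: "eigenvector L (vs 1) l1"
    and eig2: "eigenvector L (vs 2) l2"
    and distinct: "l1 \<noteq> l2"
    and norm1: "(vs 1 $ v - vs 1 $ w)\<^sup>2 / (vs 1 \<bullet> vs 1) = 1 + 1 / (l2 - l1)"
    and norm2: "(vs 2 $ v - vs 2 $ w)\<^sup>2 / (vs 2 \<bullet> vs 2) = 1 + 1 / (l1 - l2)"
    and equal_rest: "\<forall>j\<in>{3..n}. vs j $ v = vs j $ w"
    and tail: "\<forall>i\<in>{1, 2}. \<forall>u<n. u \<noteq> v \<longrightarrow> u \<noteq> w \<longrightarrow>
                 vs i $ u = L $$ (u, w) - L $$ (u, v)"
  shows "vs 1 $ v = - l1 + real (vdegree n E w) + 1 \<and> vs 1 $ w = l1 - real (vdegree n E v) - 1 \<and>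
         vs 2 $ v = - l2 + real (vdegree n E w) + 1 \<and> vs 2 $ w = l2 - real (vdegree n E v) - 1"
proof -
  let ?d1 = "real (vdegree n E v)"
  have L: "L \<in> carrier_mat n n"
    unfolding L_def by (rule signed_laplacian_carrier)
  have L_vw: "L $$ (v, w) = 0" "L $$ (w, v) = 0"
    using signed_laplacian_nonedge vw unfolding L_def by (auto simp: insert_commute)
  have L_diag: "L $$ (v, v) = ?d1" "L $$ (w, w) = real (vdegree n E w)"
    using signed_laplacian_diag vw unfolding L_def by auto
  have one_two: "1 \<in> {1..n}" "2 \<in> {1..n}" using vw by auto
  obtain c1 c2 where span: "unit_vec n v - unit_vec n w = c1 \<cdot>\<^sub>v vs 1 + c2 \<cdot>\<^sub>v vs 2"
    using unit_vec_diff_in_span_two[OF carrier nonzero orth vw(1-3) equal_rest] by blast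
  show ?thesis
  proof (cases "\<exists>u<n. u \<noteq> v \<and> u \<noteq> w \<and> L $$ (u, w) - L $$ (u, v) \<noteq> 0")
    case True
    then obtain u where u: "u < n" "u \<noteq> v" "u \<noteq> w" "L $$ (u, w) - L $$ (u, v) \<noteq> 0"
      by blast
    have "vs 1 \<bullet> vs 2 = 0" using orth one_two by auto
    then show ?thesis
      using eigenvector_pair_entries[OF L vw(1-3) L_vw eig1 eig2 distinct _ span u(1-3) _ _ u(4) norm1]
        tail u L_diag by auto
  next
    case False
    then have "\<forall>u<n. u \<noteq> v \<longrightarrow> u \<noteq> w \<longrightarrow> L $$ (u, v) = L $$ (u, w)"
      by auto
    then have "l = ?d1" if "i \<in> {1, 2}" and "eigenvector L (vs i) l" for i l
      using signed_laplacian_eigenvalue_if_supported_on_pair[OF G vw] that tail unfolding L_def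
      by auto
    then show ?thesis using eig1 eig2 distinct by auto
  qed
qed

end
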